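(* Let $\mathcal{A}$ be a pOC with state set $Q$ whose underlying chain $\mathcal{X}$, with transition matrix $A$, is strongly connected. Let $\alpha$ be the invariant distribution of $\mathcal{X}$, $s$ the vector of expected counter changes, and $t=\alpha s$ the trend. Then: (a) With $W:=\mathbf{1}\alpha$, i.e., the matrix each of whose rows equals $\alpha$, the matrix $Z:=(I-A+W)^{-1}$ exists and $Zs$ is a potential. (b) There exists a potential $v$ with $v_{\max}-v_{\min}\le 2|Q|/x_{\min}^{|Q|}$, where $x_{\min}$ is the smallest nonzero entry of $A$.
   Context: A pOC has finite state set $Q$ and positive rules $\delta^{>0}\subseteq Q\times\{-1,0,1\}\times Q$ with probabilities $P^{>0}$, which form a positive probability distribution over the outgoing positive rules of each state. $\mathcal{X}$ is the finite Markov chain on $Q$ with transition matrix $A_{pq}=\sum_cP^{>0}(p,c,q)$. $s_p=\sum_{(p,c,q)\in\delta^{>0}}P^{>0}(p,c,q)\cdot c$. A potential is any vector $v\in\mathbb{R}^Q$ satisfying $s+Av=v+\mathbf{1}t$, where $\mathbf{1}$ is the all-ones vector. $v_{\max}$ and $v_{\min}$ denote the largest and smallest components of $v$. *)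

theory Defs
  imports "HOL-Analysis.Analysis"
begin

text \<open>A pOC restricted to its positive rules.
  P p c q is the probability of the positive rule (p,c,q); the rules are exactly
  the triples with positive probability, c ranging over {-1,0,1}.\<close>

definition pOC_pos :: "('q::finite \<Rightarrow> int \<Rightarrow> 'q \<Rightarrow> real) \<Rightarrow> bool" where
  "pOC_pos P \<longleftrightarrow>
     (\<forall>p c q. P p c q \<ge> 0) \<and>
     (\<forall>p c q. c \<notin> {-1, 0, 1} \<longrightarrow> P p c q = 0) \<and>
     (\<forall>p. (\<Sum>c\<in>{-1, 0, 1::int}. \<Sum>q\<in>UNIV. P p c q) = 1)"

definition trans_mat :: "('q::finite \<Rightarrow> int \<Rightarrow> 'q \<Rightarrow> real) \<Rightarrow> real^'q^'q" where
  "trans_mat P = (\<chi> p q. \<Sum>c\<in>{-1, 0, 1::int}. P p c q)"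

definition exp_change :: "('q::finite \<Rightarrow> int \<Rightarrow> 'q \<Rightarrow> real) \<Rightarrow> real^'q" where
  "exp_change P = (\<chi> p. \<Sum>c\<in>{-1, 0, 1::int}. \<Sum>q\<in>UNIV. P p c q * of_int c)"

definition strongly_connected_mat :: "real^'q^'q \<Rightarrow> bool" where
  "strongly_connected_mat A \<longleftrightarrow> (\<forall>p q. (p, q) \<in> {(p, q). A $ p $ q > 0}\<^sup>*)"

definition invariant_distribution :: "real^'q^'q \<Rightarrow> real^'q \<Rightarrow> bool" where
  "invariant_distribution A \<alpha> \<longleftrightarrow>
     (\<forall>q. \<alpha> $ q \<ge> 0) \<and> sum (\<lambda>q. \<alpha> $ q) UNIV = 1 \<and> \<alpha> v* A = \<alpha>"

definition potential :: "real^'q^'q \<Rightarrow> real^'q \<Rightarrow> real \<Rightarrow> real^'q \<Rightarrow> bool" where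
  "potential A s t v \<longleftrightarrow> s + A *v v = v + (\<chi> i. t)"

definition vmax :: "real^'q::finite \<Rightarrow> real" where
  "vmax v = Max (range (\<lambda>i. v $ i))"

definition vmin :: "real^'q::finite \<Rightarrow> real" where
  "vmin v = Min (range (\<lambda>i. v $ i))"

end

theory Submission
  imports Defs
begin

text \<open>
  (a) If \<open>(I - A + W) y = 0\<close>, taking the inner product with \<open>\<alpha>\<close> kills \<open>(I - A) y\<close> and
  leaves \<open>\<alpha> \<bullet> y = 0\<close>; hence \<open>A y = y\<close>, so \<open>y\<close> is constant by the maximum principle on
  the strongly connected chain, and \<open>\<alpha> \<bullet> y = 0\<close> forces \<open>y = 0\<close>. Likewise
  \<open>(I - A + W) v = s\<close> gives \<open>\<alpha> \<bullet> v = \<alpha> \<bullet> s = t\<close>, which turns it into the potential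
  equation.

  (b) A potential satisfies \<open>v = (s - t) + A v\<close> with \<open>s p - t \<le> 2\<close>. With \<open>x\<close> the smallest
  nonzero entry of \<open>A\<close> and \<open>D = vmax v - vmin v\<close>, the level sets
  \<open>{p. v p \<le> vmin v + 2 k + (1 - x ^ k) D}\<close> grow by at least one state per step \<open>k\<close>, namely
  by the source of any edge entering them. So after \<open>|Q| - 1\<close> steps they contain every
  state, which yields \<open>x ^ |Q| * D \<le> 2 |Q|\<close>.
\<close>

definition stochastic_mat :: "real^'n^'n \<Rightarrow> bool" where
  "stochastic_mat A \<longleftrightarrow> (\<forall>i j. 0 \<le> A $ i $ j) \<and> (\<forall>i. (\<Sum>j\<in>UNIV. A $ i $ j) = 1)"

definition min_nonzero_entry :: "real^'n^'m \<Rightarrow> real" where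
  "min_nonzero_entry A = Min {x. \<exists>p q. x = A $ p $ q \<and> x \<noteq> 0}"

lemma vmin_le: "vmin v \<le> v $ i"
  unfolding vmin_def by simp

lemma vmax_ge: "v $ i \<le> vmax v"
  unfolding vmax_def by simp

lemma vmin_attained: "\<exists>i. v $ i = vmin v"
proof -
  have "vmin v \<in> range (\<lambda>i. v $ i)" unfolding vmin_def by (intro Min_in) auto
  then show ?thesis by auto
qed

lemma vmax_attained: "\<exists>i. v $ i = vmax v"
proof -
  have "vmax v \<in> range (\<lambda>i. v $ i)" unfolding vmax_def by (intro Max_in) auto
  then show ?thesis by auto
qed

lemma invertible_mult_matrix_inv:
  fixes K :: "'a::semiring_1^'n^'n"
  assumes "invertible K"
  shows "K *v (matrix_inv K *v y) = y"
proof -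
  have "K ** matrix_inv K = mat 1"
    using assms unfolding invertible_def matrix_inv_def by (rule someI_ex[THEN conjunct1])
  then show ?thesis by (simp add: matrix_vector_mul_assoc)
qed

lemma finite_chain_exhausts_UNIV:
  fixes T :: "nat \<Rightarrow> 'a::finite set"
  assumes "T 0 \<noteq> {}"
    and mono: "\<And>k. T k \<subseteq> T (Suc k)"
    and grow: "\<And>k. T k \<noteq> UNIV \<Longrightarrow> T (Suc k) \<noteq> T k"
  shows "T (CARD('a) - 1) = UNIV"
proof -
  have "T k = UNIV \<or> k < card (T k)" for k
  proof (induction k)
    case 0
    then show ?case using assms(1) by (simp add: card_gt_0_iff)
  next
    case (Suc k)
    show ?case
    proof (cases "T k = UNIV")
      case True
      then show ?thesis using mono[of k] by auto
    next
      case False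
      then have "T k \<subset> T (Suc k)" using mono[of k] grow[of k] by blast
      then have "card (T k) < card (T (Suc k))" by (simp add: psubset_card_mono)
      then show ?thesis using Suc False by simp
    qed
  qed
  then have "T (CARD('a) - 1) = UNIV \<or> CARD('a) \<le> card (T (CARD('a) - 1))"
    by (metis Suc_leI Suc_pred' zero_less_card_finite)
  then show ?thesis
    using card_seteq[of UNIV "T (CARD('a) - 1)"] by auto
qed

lemma strongly_connected_mat_entering_edge:
  assumes "strongly_connected_mat A" "S \<noteq> {}" "S \<noteq> UNIV"
  shows "\<exists>a r. 0 < A $ a $ r \<and> a \<notin> S \<and> r \<in> S"
proof -
  obtain p q where "p \<notin> S" "q \<in> S" using assms(2,3) by auto
  have "(p, q) \<in> {(p, q). A $ p $ q > 0}\<^sup>*"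
    using assms(1) unfolding strongly_connected_mat_def by blast
  then show ?thesis
    using \<open>q \<in> S\<close>
  proof (induction rule: rtrancl_induct)
    case base
    then show ?case using \<open>p \<notin> S\<close> by simp
  next
    case (step y z)
    then show ?case by (cases "y \<in> S") auto
  qed
qed

subsection \<open>Stochastic matrices\<close>

context
  fixes A :: "real^'n^'n"
  assumes A: "stochastic_mat A"
begin

lemma stochastic_mat_nonneg: "0 \<le> A $ i $ j"
  using A unfolding stochastic_mat_def by blast

lemma stochastic_mat_row_sum: "(\<Sum>j\<in>UNIV. A $ i $ j) = 1"
  using A unfolding stochastic_mat_def by blast

lemma stochastic_mat_row_sum_remove: "(\<Sum>j\<in>UNIV - {r}. A $ i $ j) = 1 - A $ i $ r"
  using sum.remove[of UNIV r "\<lambda>j. A $ i $ j"] stochastic_mat_row_sum by simp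

lemma stochastic_mat_le_one: "A $ i $ j \<le> 1"
  using stochastic_mat_row_sum_remove[of i j] sum_nonneg[of "UNIV - {j}" "\<lambda>j. A $ i $ j"]
    stochastic_mat_nonneg by simp

lemma min_nonzero_entry_bounds:
  "0 < min_nonzero_entry A" "min_nonzero_entry A \<le> 1"
  "0 < A $ i $ j \<Longrightarrow> min_nonzero_entry A \<le> A $ i $ j"
proof -
  define X where "X = {x. \<exists>p q. x = A $ p $ q \<and> x \<noteq> 0}"
  have "finite X"
    by (rule finite_subset[of _ "range (\<lambda>(p, q). A $ p $ q)"]) (auto simp: X_def)
  moreover obtain j0 where "A $ i $ j0 \<noteq> 0"
    using stochastic_mat_row_sum[of i] by (metis sum.neutral zero_neq_one)
  then have "X \<noteq> {}" unfolding X_def by blast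
  ultimately have "min_nonzero_entry A \<in> X"
    unfolding min_nonzero_entry_def X_def[symmetric] by (rule Min_in)
  then obtain p q where "min_nonzero_entry A = A $ p $ q" "A $ p $ q \<noteq> 0"
    unfolding X_def by auto
  then show "0 < min_nonzero_entry A" "min_nonzero_entry A \<le> 1"
    using stochastic_mat_nonneg[of p q] stochastic_mat_le_one[of p q] by auto
  show "min_nonzero_entry A \<le> A $ i $ j" if "0 < A $ i $ j"
    unfolding min_nonzero_entry_def using \<open>finite X\<close> that by (intro Min_le) (auto simp: X_def)
qed

lemma stochastic_mat_fixed_vector_const:
  assumes "strongly_connected_mat A" "A *v y = y"
  shows "y $ p = y $ q"
proof -
  define S where "S = {r. y $ r = vmax y}"
  have edge_into_S: "y $ r = vmax y" if "y $ a = vmax y" "0 < A $ a $ r" for a r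
  proof -
    have "(\<Sum>j\<in>UNIV. A $ a $ j * (vmax y - y $ j))
        = vmax y * (\<Sum>j\<in>UNIV. A $ a $ j) - (A *v y) $ a"
      by (simp add: algebra_simps sum_subtractf sum_distrib_left matrix_vector_mult_def)
    also have "\<dots> = vmax y - (A *v y) $ a"
      by (simp add: stochastic_mat_row_sum)
    also have "\<dots> = 0" using that(1) assms(2) by simp
    moreover have "0 \<le> A $ a $ j * (vmax y - y $ j)" for j
      using stochastic_mat_nonneg vmax_ge[of y j] by simp
    ultimately have "A $ a $ r * (vmax y - y $ r) = 0"
      using sum_nonneg_eq_0_iff[of UNIV "\<lambda>j. A $ a $ j * (vmax y - y $ j)"] by simp
    then show ?thesis using that(2) by simp
  qed
  have "S = UNIV"
  proof (rule ccontr)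
    assume "S \<noteq> UNIV"
    moreover have "S \<noteq> {}" using vmax_attained[of y] unfolding S_def by auto
    ultimately obtain a r where "0 < A $ a $ r" "a \<in> S" "r \<notin> S"
      using strongly_connected_mat_entering_edge[OF assms(1), of "- S"] by auto
    then show False using edge_into_S unfolding S_def by auto
  qed
  then have "p \<in> S" "q \<in> S" by auto
  then show ?thesis unfolding S_def by simp
qed

subsection \<open>The fundamental matrix\<close>

context
  fixes \<alpha> :: "real^'n"
  assumes \<alpha>_inv: "\<alpha> v* A = \<alpha>" and \<alpha>_sum: "(\<Sum>i\<in>UNIV. \<alpha> $ i) = 1"
begin

lemma fundamental_matrix_mult:
  "(mat 1 - A + (\<chi> i j. \<alpha> $ j)) *v y = y - A *v y + (\<chi> i. \<alpha> \<bullet> y)"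
proof -
  have "(\<chi> i j. \<alpha> $ j) *v y = (\<chi> i. \<alpha> \<bullet> y)"
    by (simp add: vec_eq_iff matrix_vector_mult_def inner_vec_def)
  then show ?thesis
    by (simp add: matrix_vector_mult_add_rdistrib matrix_vector_mult_diff_rdistrib)
qed

lemma inner_const_vec: "\<alpha> \<bullet> (\<chi> i. c) = c"
  using \<alpha>_sum by (simp add: inner_vec_def sum_distrib_right[symmetric])

lemma inner_fundamental_matrix_mult:
  "\<alpha> \<bullet> ((mat 1 - A + (\<chi> i j. \<alpha> $ j)) *v y) = \<alpha> \<bullet> y"
proof -
  have "\<alpha> \<bullet> (A *v y) = \<alpha> \<bullet> y"
    using dot_lmul_matrix[of \<alpha> A y] \<alpha>_inv by simp
  then show ?thesis
    unfolding fundamental_matrix_mult by (simp add: inner_add_right inner_diff_right inner_const_vec)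
qed

lemma invertible_fundamental_matrix:
  assumes "strongly_connected_mat A"
  shows "invertible (mat 1 - A + (\<chi> i j. \<alpha> $ j))"
  unfolding invertible_left_inverse matrix_left_invertible_ker
proof (intro allI impI)
  fix y
  assume ker: "(mat 1 - A + (\<chi> i j. \<alpha> $ j)) *v y = 0"
  then have "\<alpha> \<bullet> y = 0"
    using inner_fundamental_matrix_mult[of y] by simp
  then have "A *v y = y"
    using ker unfolding fundamental_matrix_mult by (simp add: vec_eq_iff)
  then have "y = (\<chi> i. y $ j)" for j
    using stochastic_mat_fixed_vector_const[OF assms] by (simp add: vec_eq_iff)
  then have "y $ j = 0" for j
    using \<open>\<alpha> \<bullet> y = 0\<close> inner_const_vec by metis
  then show "y = 0" by (simp add: vec_eq_iff)
qed

lemma potential_fundamental_matrix_solution: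
  assumes "(mat 1 - A + (\<chi> i j. \<alpha> $ j)) *v v = s"
  shows "potential A s (\<alpha> \<bullet> s) v"
proof -
  have "\<alpha> \<bullet> v = \<alpha> \<bullet> s"
    using inner_fundamental_matrix_mult[of v] assms by simp
  then show ?thesis
    using assms unfolding potential_def fundamental_matrix_mult
    by (simp add: vec_eq_iff algebra_simps)
qed

end

subsection \<open>Oscillation of potentials\<close>

lemma potential_entry_le:
  assumes "potential A s t v" "s $ a - t \<le> c"
  shows "v $ a \<le> c + A $ a $ r * v $ r + (1 - A $ a $ r) * vmax v"
proof -
  have "(s + A *v v) $ a = (v + (\<chi> i. t)) $ a"
    using assms(1) unfolding potential_def by simp
  then have "v $ a = s $ a - t + (A *v v) $ a" by simp
  also have "(A *v v) $ a = A $ a $ r * v $ r + (\<Sum>j\<in>UNIV - {r}. A $ a $ j * v $ j)"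
    unfolding matrix_vector_mult_def using sum.remove[of UNIV r] by simp
  also have "(\<Sum>j\<in>UNIV - {r}. A $ a $ j * v $ j) \<le> (\<Sum>j\<in>UNIV - {r}. A $ a $ j * vmax v)"
    by (intro sum_mono mult_left_mono vmax_ge stochastic_mat_nonneg)
  also have "\<dots> = (1 - A $ a $ r) * vmax v"
    by (simp add: sum_distrib_right[symmetric] stochastic_mat_row_sum_remove)
  finally show ?thesis using assms(2) by simp
qed

lemma potential_oscillation_le:
  assumes "strongly_connected_mat A" "potential A s t v"
    and c: "0 \<le> c" "\<And>p. s $ p - t \<le> c"
  shows "vmax v - vmin v \<le> c * real CARD('n) / min_nonzero_entry A ^ CARD('n)"
proof -
  define x where "x = min_nonzero_entry A"
  define D where "D = vmax v - vmin v"
  define b where "b k = vmin v + c * real k + (1 - x ^ k) * D" for k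
  define T where "T k = {p. v $ p \<le> b k}" for k
  have x: "0 < x" "x \<le> 1" "\<And>i j. 0 < A $ i $ j \<Longrightarrow> x \<le> A $ i $ j"
    unfolding x_def using min_nonzero_entry_bounds by auto
  have D: "0 \<le> D" unfolding D_def using order_trans[OF vmin_le vmax_ge, of v] by simp
  have b_mono: "b k \<le> b (Suc k)" for k
  proof -
    have "x ^ Suc k \<le> x ^ k" using x(1,2) power_decreasing[of k "Suc k" x] by simp
    then have "(1 - x ^ k) * D \<le> (1 - x ^ Suc k) * D" using D by (simp add: mult_right_mono)
    then show ?thesis unfolding b_def using c(1) by (simp add: distrib_left)
  qed
  have b_step: "c + A $ a $ r * b k + (1 - A $ a $ r) * vmax v \<le> b (Suc k)"
    if "0 < A $ a $ r" for a r k
  proof -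
    have "b (Suc k) - (c + A $ a $ r * b k + (1 - A $ a $ r) * vmax v)
        = c * real k * (1 - A $ a $ r) + D * x ^ k * (A $ a $ r - x)"
      unfolding b_def D_def by (simp add: algebra_simps)
    moreover have "0 \<le> c * real k * (1 - A $ a $ r)"
      using c(1) stochastic_mat_le_one by simp
    moreover have "0 \<le> D * x ^ k * (A $ a $ r - x)"
      using D x that by simp
    ultimately show ?thesis by linarith
  qed
  have "T (CARD('n) - 1) = UNIV"
  proof (rule finite_chain_exhausts_UNIV)
    obtain i where "v $ i = vmin v" using vmin_attained by blast
    then show "T 0 \<noteq> {}" unfolding T_def b_def by (auto intro!: exI[of _ i])
    show mono: "T k \<subseteq> T (Suc k)" for k
      unfolding T_def using b_mono[of k] by auto
    show "T (Suc k) \<noteq> T k" if proper: "T k \<noteq> UNIV" for k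
    proof -
      have "T 0 \<subseteq> T k" using lift_Suc_mono_le[of T, OF mono] by simp
      then have "T k \<noteq> {}" using \<open>T 0 \<noteq> {}\<close> by blast
      then obtain a r where ar: "0 < A $ a $ r" "a \<notin> T k" "r \<in> T k"
        using strongly_connected_mat_entering_edge[OF assms(1) _ proper] by blast
      have "A $ a $ r * v $ r \<le> A $ a $ r * b k"
        using ar unfolding T_def by (simp add: mult_left_mono)
      then have "a \<in> T (Suc k)"
        using potential_entry_le[OF assms(2) c(2), of a r] b_step[OF ar(1), of k]
        unfolding T_def by simp
      then show ?thesis using ar(2) by blast
    qed
  qed
  then have "vmax v \<le> b (CARD('n) - 1)"
    using vmax_attained[of v] unfolding T_def by (metis UNIV_I mem_Collect_eq)
  also have "\<dots> \<le> b CARD('n)"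
    using b_mono[of "CARD('n) - 1"] by simp
  finally have "x ^ CARD('n) * D \<le> c * real CARD('n)"
    unfolding b_def D_def by (simp add: algebra_simps)
  then show ?thesis
    using x(1) unfolding x_def D_def by (simp add: pos_le_divide_eq mult.commute)
qed

end

subsection \<open>Positive rules of a pOC\<close>

lemma stochastic_trans_mat:
  assumes "pOC_pos P"
  shows "stochastic_mat (trans_mat P)"
proof -
  have "(\<Sum>q\<in>UNIV. trans_mat P $ p $ q) = (\<Sum>c\<in>{-1, 0, 1::int}. \<Sum>q\<in>UNIV. P p c q)" for p
    unfolding trans_mat_def by (simp add: sum.swap[of _ UNIV])
  then show ?thesis
    using assms unfolding pOC_pos_def stochastic_mat_def trans_mat_def
    by (simp add: sum_nonneg)
qed

lemma abs_exp_change_le_one: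
  assumes "pOC_pos P"
  shows "\<bar>exp_change P $ p\<bar> \<le> 1"
proof -
  let ?m = "\<lambda>c. \<Sum>q\<in>UNIV. P p c q"
  have "0 \<le> ?m c" for c
    using assms unfolding pOC_pos_def by (simp add: sum_nonneg)
  moreover have "?m (-1) + ?m 0 + ?m 1 = 1"
    using assms unfolding pOC_pos_def by (simp add: add.assoc)
  moreover have "exp_change P $ p = ?m 1 - ?m (-1)"
    by (simp add: exp_change_def sum_negf)
  ultimately show ?thesis
    by (smt (verit))
qed

lemma abs_inner_distribution_le:
  fixes \<alpha> s :: "real^'n"
  assumes "\<And>i. 0 \<le> \<alpha> $ i" "(\<Sum>i\<in>UNIV. \<alpha> $ i) = 1" "\<And>i. \<bar>s $ i\<bar> \<le> B"
  shows "\<bar>\<alpha> \<bullet> s\<bar> \<le> B"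
proof -
  have "\<bar>\<alpha> \<bullet> s\<bar> \<le> (\<Sum>i\<in>UNIV. \<alpha> $ i * \<bar>s $ i\<bar>)"
    using sum_abs[of "\<lambda>i. \<alpha> $ i * s $ i" UNIV] assms(1)
    by (simp add: inner_vec_def abs_mult)
  also have "\<dots> \<le> (\<Sum>i\<in>UNIV. \<alpha> $ i * B)"
    by (intro sum_mono mult_left_mono assms(1,3))
  finally show ?thesis
    using assms(2) by (simp add: sum_distrib_right[symmetric])
qed

theorem mainTheorem9:
  fixes P :: "'q::finite \<Rightarrow> int \<Rightarrow> 'q \<Rightarrow> real" and \<alpha> :: "real^'q"
  assumes "pOC_pos P"
    and "strongly_connected_mat (trans_mat P)"
    and "invariant_distribution (trans_mat P) \<alpha>"
  shows "invertible (mat 1 - trans_mat P + (\<chi> i j. \<alpha> $ j))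
         \<and> potential (trans_mat P) (exp_change P) (\<alpha> \<bullet> exp_change P)
             (matrix_inv (mat 1 - trans_mat P + (\<chi> i j. \<alpha> $ j)) *v exp_change P)
         \<and> (\<exists>v. potential (trans_mat P) (exp_change P) (\<alpha> \<bullet> exp_change P) v
         \<and> vmax v - vmin v \<le> 2 * real CARD('q)
              / (Min {x. \<exists>p q. x = trans_mat P $ p $ q \<and> x \<noteq> 0}) ^ CARD('q))"
proof -
  let ?A = "trans_mat P" and ?s = "exp_change P"
  let ?K = "mat 1 - ?A + (\<chi> i j. \<alpha> $ j)"
  have A: "stochastic_mat ?A" using assms(1) by (rule stochastic_trans_mat)
  have \<alpha>: "\<alpha> v* ?A = \<alpha>" "(\<Sum>i\<in>UNIV. \<alpha> $ i) = 1" "\<And>i. 0 \<le> \<alpha> $ i"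
    using assms(3) unfolding invariant_distribution_def by auto
  have inv: "invertible ?K"
    using invertible_fundamental_matrix[OF A \<alpha>(1,2) assms(2)] .
  then have "?K *v (matrix_inv ?K *v ?s) = ?s" by (rule invertible_mult_matrix_inv)
  then have pot: "potential ?A ?s (\<alpha> \<bullet> ?s) (matrix_inv ?K *v ?s)"
    by (rule potential_fundamental_matrix_solution[OF A \<alpha>(1,2)])
  have "?s $ p - \<alpha> \<bullet> ?s \<le> 2" for p
    using abs_exp_change_le_one[OF assms(1), of p]
      abs_inner_distribution_le[OF \<alpha>(3,2) abs_exp_change_le_one[OF assms(1)]] by linarith
  then have "vmax (matrix_inv ?K *v ?s) - vmin (matrix_inv ?K *v ?s)
      \<le> 2 * real CARD('q) / min_nonzero_entry ?A ^ CARD('q)"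
    using potential_oscillation_le[OF A assms(2) pot] by simp
  then show ?thesis
    using inv pot unfolding min_nonzero_entry_def by blast
qed

end
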